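(* Let $H,K$ be $n$-Hilbert spaces, fix $a_2,\dots,a_n\in H$, $b_2,\dots,b_n\in K$, $C_1\in\mathcal{GB}(H_F)$, $C_2\in\mathcal{GB}(K_G)$. Let $\{f_i\}_{i=1}^\infty$ be a $C_1$-controlled frame associated to $(a_2,\dots,a_n)$ for $H$ with bounds $A,B$ and $\{g_j\}_{j=1}^\infty$ a $C_2$-controlled frame associated to $(b_2,\dots,b_n)$ for $K$ with bounds $C,D$, with frame operators $S_{C_1}$, $S_{C_2}$. Then $AC\,I_{F\otimes G}\le S_{C_1\otimes C_2}\le BD\,I_{F\otimes G}$, where $I_{F\otimes G}$ is the identity on $H_F\otimes K_G$ and $S_{C_1\otimes C_2}$ is the frame operator of $\{f_i\otimes g_j\}_{i,j=1}^\infty$.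
   Context: Let $n\ge2$. For a complex $n$-Hilbert space $H$ with $n$-inner product $\langle\cdot,\cdot|\cdot,\dots,\cdot\rangle_1$ and $n$-norm $\|x_1,\dots,x_n\|_1=\langle x_1,x_1|x_2,\dots,x_n\rangle_1^{1/2}$, and fixed $a_2,\dots,a_n\in H$, $F=\{a_2,\dots,a_n\}$: $\langle x,y\rangle_F=\langle x,y|a_2,\dots,a_n\rangle_1$ is a semi-inner product on $H$ inducing an inner product on $H/L_F$ ($L_F=\mathrm{span}\,F$); identifying $H/L_F$ with an algebraic complement of $L_F$, $H_F$ is its Hilbert completion, with norm written $\|f,a_2,\dots,a_n\|_1$. Likewise $K$ with $\langle\cdot,\cdot|\cdot,\dots,\cdot\rangle_2$, $G=\{b_2,\dots,b_n\}$, Hilbert space $K_G$. $H\otimes K$ carries the $n$-inner product $\langle f_1\otimes g_1,f_2\otimes g_2|f_3\otimes g_3,\dots,f_n\otimes g_n\rangle=\langle f_1,f_2|f_3,\dots,f_n\rangle_1\langle g_1,g_2|g_3,\dots,g_n\rangle_2$; $H_F\otimes K_G$ is the Hilbert tensor product and $(Q\otimes T)(f\otimes g)=Qf\otimes Tg$. $\mathcal{GB}(\cdot)$: bounded operators with bounded inverse; $\le$ between self-adjoint operators means $\langle Tx,x\rangle\le\langle Sx,x\rangle$ for all $x$. For $C\in\mathcal{GB}(H_F)$, $\{f_i\}\subseteq H$ is a $C$-controlled frame associated to $(a_2,\dots,a_n)$ for $H$ with bounds $A,B$ if $A\|f,a_2,\dots,a_n\|_1^2\le\sum_i\langle f,f_i|a_2,\dots,a_n\rangle_1\langle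 Cf_i,f|a_2,\dots,a_n\rangle_1\le B\|f,a_2,\dots,a_n\|_1^2$ for all $f\in H_F$; its frame operator is $S_Cf=\sum_i\langle f,f_i|a_2,\dots,a_n\rangle_1Cf_i$ (similarly for $K$). The frame operator of $\{f_i\otimes g_j\}$ is $S_{C_1\otimes C_2}(f\otimes g)=\sum_{i,j}\langle f\otimes g,f_i\otimes g_j|a_2\otimes b_2,\dots,a_n\otimes b_n\rangle(C_1\otimes C_2)(f_i\otimes g_j)$. *)

theory Defs
  imports Complex_Main "HOL-Library.Multiset"
begin

definition list_dependent :: "(complex \<Rightarrow> 'v::ab_group_add \<Rightarrow> 'v) \<Rightarrow> 'v list \<Rightarrow> bool" where
  "list_dependent sc xs \<longleftrightarrow>
     (\<exists>c :: nat \<Rightarrow> complex. (\<exists>i<length xs. c i \<noteq> 0) \<and>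
        (\<Sum>i<length xs. sc (c i) (xs ! i)) = 0)"

text \<open>ip x y zs stands for the n-inner product <x,y|z_2,...,z_n>, where
  zs = [z_2,...,z_n] is a list of length n-1.\<close>

definition n_inner_product ::
  "nat \<Rightarrow> (complex \<Rightarrow> 'v::ab_group_add \<Rightarrow> 'v) \<Rightarrow> ('v \<Rightarrow> 'v \<Rightarrow> 'v list \<Rightarrow> complex) \<Rightarrow> bool" where
  "n_inner_product n sc ip \<longleftrightarrow>
     (\<forall>x zs. length zs = n - 1 \<longrightarrow>
        Im (ip x x zs) = 0 \<and> Re (ip x x zs) \<ge> 0 \<and>
        (ip x x zs = 0 \<longleftrightarrow> list_dependent sc (x # zs))) \<and>
     (\<forall>xs ys. length xs = n \<longrightarrow> mset ys = mset xs \<longrightarrow>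
        ip (hd xs) (hd xs) (tl xs) = ip (hd ys) (hd ys) (tl ys)) \<and>
     (\<forall>x y zs. length zs = n - 1 \<longrightarrow> ip x y zs = cnj (ip y x zs)) \<and>
     (\<forall>c x y zs. length zs = n - 1 \<longrightarrow> ip (sc c x) y zs = c * ip x y zs) \<and>
     (\<forall>x x' y zs. length zs = n - 1 \<longrightarrow> ip (x + x') y zs = ip x y zs + ip x' y zs)"

definition n_norm :: "('v \<Rightarrow> 'v \<Rightarrow> 'v list \<Rightarrow> complex) \<Rightarrow> 'v \<Rightarrow> 'v list \<Rightarrow> real" where
  "n_norm ip x zs = sqrt (Re (ip x x zs))"

definition n_cauchy :: "nat \<Rightarrow> ('v::ab_group_add \<Rightarrow> 'v \<Rightarrow> 'v list \<Rightarrow> complex) \<Rightarrow> (nat \<Rightarrow> 'v) \<Rightarrow> bool" where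
  "n_cauchy n ip X \<longleftrightarrow>
     (\<forall>zs. length zs = n - 1 \<longrightarrow>
        (\<forall>e>0. \<exists>N. \<forall>k\<ge>N. \<forall>l\<ge>N. n_norm ip (X k - X l) zs < e))"

definition n_converges :: "nat \<Rightarrow> ('v::ab_group_add \<Rightarrow> 'v \<Rightarrow> 'v list \<Rightarrow> complex) \<Rightarrow> (nat \<Rightarrow> 'v) \<Rightarrow> 'v \<Rightarrow> bool" where
  "n_converges n ip X x \<longleftrightarrow>
     (\<forall>zs. length zs = n - 1 \<longrightarrow> (\<lambda>k. n_norm ip (X k - x) zs) \<longlonglongrightarrow> 0)"

definition n_hilbert_space ::
  "nat \<Rightarrow> (complex \<Rightarrow> 'v::ab_group_add \<Rightarrow> 'v) \<Rightarrow> ('v \<Rightarrow> 'v \<Rightarrow> 'v list \<Rightarrow> complex) \<Rightarrow> bool" where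
  "n_hilbert_space n sc ip \<longleftrightarrow>
     vector_space sc \<and>
     (\<exists>xs. length xs = n \<and> \<not> list_dependent sc xs) \<and>
     n_inner_product n sc ip \<and>
     (\<forall>X. n_cauchy n ip X \<longrightarrow> (\<exists>x. n_converges n ip X x))"

definition hnorm :: "('v \<Rightarrow> 'v \<Rightarrow> complex) \<Rightarrow> 'v \<Rightarrow> real" where
  "hnorm ip x = sqrt (Re (ip x x))"

definition hilbert_space :: "(complex \<Rightarrow> 'v::ab_group_add \<Rightarrow> 'v) \<Rightarrow> ('v \<Rightarrow> 'v \<Rightarrow> complex) \<Rightarrow> bool" where
  "hilbert_space sc ip \<longleftrightarrow>
     vector_space sc \<and>
     (\<forall>x x' y. ip (x + x') y = ip x y + ip x' y) \<and>
     (\<forall>c x y. ip (sc c x) y = c * ip x y) \<and>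
     (\<forall>x y. ip x y = cnj (ip y x)) \<and>
     (\<forall>x. Im (ip x x) = 0 \<and> Re (ip x x) \<ge> 0) \<and>
     (\<forall>x. ip x x = 0 \<longrightarrow> x = 0) \<and>
     (\<forall>X. (\<forall>e>0. \<exists>N. \<forall>k\<ge>N. \<forall>l\<ge>N. hnorm ip (X k - X l) < e) \<longrightarrow>
          (\<exists>x. (\<lambda>k. hnorm ip (X k - x)) \<longlonglongrightarrow> 0))"

definition bounded_op :: "(complex \<Rightarrow> 'v::ab_group_add \<Rightarrow> 'v) \<Rightarrow> ('v \<Rightarrow> 'v \<Rightarrow> complex) \<Rightarrow> ('v \<Rightarrow> 'v) \<Rightarrow> bool" where
  "bounded_op sc ip T \<longleftrightarrow>
     (\<forall>x y. T (x + y) = T x + T y) \<and> (\<forall>c x. T (sc c x) = sc c (T x)) \<and>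
     (\<exists>M. \<forall>x. hnorm ip (T x) \<le> M * hnorm ip x)"

definition GB :: "(complex \<Rightarrow> 'v::ab_group_add \<Rightarrow> 'v) \<Rightarrow> ('v \<Rightarrow> 'v \<Rightarrow> complex) \<Rightarrow> ('v \<Rightarrow> 'v) set" where
  "GB sc ip = {T. bounded_op sc ip T \<and>
       (\<exists>T'. bounded_op sc ip T' \<and> (\<forall>x. T' (T x) = x) \<and> (\<forall>x. T (T' x) = x))}"

definition hsum_unconditional :: "('v::ab_group_add \<Rightarrow> 'v \<Rightarrow> complex) \<Rightarrow> ('i \<Rightarrow> 'v) \<Rightarrow> 'i set \<Rightarrow> 'v \<Rightarrow> bool" where
  "hsum_unconditional ip u I s \<longleftrightarrow>
     (\<forall>e>0. \<exists>F0. finite F0 \<and> F0 \<subseteq> I \<and>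
        (\<forall>F. finite F \<and> F0 \<subseteq> F \<and> F \<subseteq> I \<longrightarrow> hnorm ip (sum u F - s) < e))"

text \<open>H_F is the Hilbert completion of H/L_F with the inner product
  <x,y>_F = <x,y|a_2,...,a_n>. We describe it up to unitary equivalence:
  a Hilbert space (sF, ipF) together with the linear map j : H -> H_F
  (quotient map H -> H/L_F followed by the inclusion into the completion),
  which preserves the F-inner product and has dense range.\<close>
definition is_HF ::
  "(complex \<Rightarrow> 'v::ab_group_add \<Rightarrow> 'v) \<Rightarrow> ('v \<Rightarrow> 'v \<Rightarrow> 'v list \<Rightarrow> complex) \<Rightarrow> 'v list \<Rightarrow>
   (complex \<Rightarrow> 'w::ab_group_add \<Rightarrow> 'w) \<Rightarrow> ('w \<Rightarrow> 'w \<Rightarrow> complex) \<Rightarrow> ('v \<Rightarrow> 'w) \<Rightarrow> bool" where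
  "is_HF sc ip as sF ipF j \<longleftrightarrow>
     hilbert_space sF ipF \<and>
     (\<forall>x y. j (x + y) = j x + j y) \<and> (\<forall>c x. j (sc c x) = sF c (j x)) \<and>
     (\<forall>x y. ipF (j x) (j y) = ip x y as) \<and>
     (\<forall>w. \<forall>e>0. \<exists>x. hnorm ipF (j x - w) < e)"

text \<open>fs is a C-controlled frame associated to (a_2,...,a_n) for H with bounds A, B,
  where H_F is realised by (sF, ipF, j) as above; an element f_i of H is regarded
  as the element j f_i of H_F.\<close>
definition controlled_frame ::
  "('w \<Rightarrow> 'w \<Rightarrow> complex) \<Rightarrow> ('v \<Rightarrow> 'w) \<Rightarrow> ('w \<Rightarrow> 'w) \<Rightarrow> (nat \<Rightarrow> 'v) \<Rightarrow> real \<Rightarrow> real \<Rightarrow> bool" where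
  "controlled_frame ipF j C fs A B \<longleftrightarrow>
     0 < A \<and> A \<le> B \<and>
     (\<forall>f. \<exists>s. (\<lambda>i. ipF f (j (fs i)) * ipF (C (j (fs i))) f) sums s \<and>
        Im s = 0 \<and> A * (hnorm ipF f)\<^sup>2 \<le> Re s \<and> Re s \<le> B * (hnorm ipF f)\<^sup>2)"

definition is_hilbert_tensor ::
  "(complex \<Rightarrow> 'f::ab_group_add \<Rightarrow> 'f) \<Rightarrow> ('f \<Rightarrow> 'f \<Rightarrow> complex) \<Rightarrow>
   (complex \<Rightarrow> 'g::ab_group_add \<Rightarrow> 'g) \<Rightarrow> ('g \<Rightarrow> 'g \<Rightarrow> complex) \<Rightarrow>
   (complex \<Rightarrow> 't::ab_group_add \<Rightarrow> 't) \<Rightarrow> ('t \<Rightarrow> 't \<Rightarrow> complex) \<Rightarrow> ('f \<Rightarrow> 'g \<Rightarrow> 't) \<Rightarrow> bool" where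
  "is_hilbert_tensor sF ipF sG ipG sT ipT tp \<longleftrightarrow>
     hilbert_space sT ipT \<and>
     (\<forall>x x' y. tp (x + x') y = tp x y + tp x' y) \<and>
     (\<forall>x y y'. tp x (y + y') = tp x y + tp x y') \<and>
     (\<forall>c x y. tp (sF c x) y = sT c (tp x y)) \<and>
     (\<forall>c x y. tp x (sG c y) = sT c (tp x y)) \<and>
     (\<forall>x y x' y'. ipT (tp x y) (tp x' y') = ipF x x' * ipG y y') \<and>
     (\<forall>z. \<forall>e>0. \<exists>ps. hnorm ipT (z - sum_list (map (\<lambda>(x, y). tp x y) ps)) < e)"

text \<open>S is the frame operator S_{C1\<otimes>C2} of {f_i \<otimes> g_j}: the bounded linear operator on
  H_F \<otimes> K_G given on elementary tensors by
  S(f\<otimes>g) = \<Sum>_{i,j} <f\<otimes>g, f_i\<otimes>g_j | a_2\<otimes>b_2,...,a_n\<otimes>b_n> (C1\<otimes>C2)(f_i\<otimes>g_j),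
  where the tensor n-inner product evaluates to <f,f_i>_F <g,g_j>_G.\<close>
definition is_tensor_frame_operator ::
  "('f::ab_group_add \<Rightarrow> 'f \<Rightarrow> complex) \<Rightarrow> ('v \<Rightarrow> 'f) \<Rightarrow> ('f \<Rightarrow> 'f) \<Rightarrow> (nat \<Rightarrow> 'v) \<Rightarrow>
   ('g::ab_group_add \<Rightarrow> 'g \<Rightarrow> complex) \<Rightarrow> ('u \<Rightarrow> 'g) \<Rightarrow> ('g \<Rightarrow> 'g) \<Rightarrow> (nat \<Rightarrow> 'u) \<Rightarrow>
   (complex \<Rightarrow> 't::ab_group_add \<Rightarrow> 't) \<Rightarrow> ('t \<Rightarrow> 't \<Rightarrow> complex) \<Rightarrow> ('f \<Rightarrow> 'g \<Rightarrow> 't) \<Rightarrow> ('t \<Rightarrow> 't) \<Rightarrow> bool" where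
  "is_tensor_frame_operator ipF jF C1 fs ipG jG C2 gs sT ipT tp S \<longleftrightarrow>
     bounded_op sT ipT S \<and>
     (\<forall>f g. hsum_unconditional ipT
        (\<lambda>(i, k). sT (ipF f (jF (fs i)) * ipG g (jG (gs k)))
                       (tp (C1 (jF (fs i))) (C2 (jG (gs k)))))
        UNIV (S (tp f g)))"

end

(*
  On H_F the controlled frame gives the sesquilinear form
  Phi1(u, v) = sum_i <u, f_i> <C1 f_i, v> = <S_C1 u, v>, which is Hermitian with
  A <u, u> <= Phi1(u, u) <= B <u, u>; likewise Phi2 on K_G with bounds C, D.  On elementary
  tensors <S (f (x) g), f' (x) g'> = Phi1(f, f') Phi2(g, g'), so at y = sum_p f_p (x) g_p the
  quadratic form <S y, y> is the value of the tensor product form Phi1 (x) Phi2.  By the Schur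
  product theorem (tensor products of positive semidefinite forms are positive semidefinite),
  Phi1 (x) Phi2 - AC <,> (x) <,> = (Phi1 - A <,>) (x) Phi2 + A <,> (x) (Phi2 - C <,>) >= 0, and
  similarly for the upper bound.  Finite sums of elementary tensors are dense and x |-> <S x, x>
  is continuous, so the bounds hold on all of H_F (x) K_G.
*)
theory Submission
  imports Defs "HOL-Library.Infinite_Set" "HOL-Library.Nonpos_Ints"
begin

locale sesquilinear_form =
  fixes s :: "complex \<Rightarrow> 'a::ab_group_add \<Rightarrow> 'a" and b :: "'a \<Rightarrow> 'a \<Rightarrow> complex"
  assumes add_left: "b (x + y) z = b x z + b y z"
    and scale_left: "b (s c x) z = c * b x z"
    and add_right: "b x (y + z) = b x y + b x z"
    and scale_right: "b x (s c y) = cnj c * b x y"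
begin

lemma zero_left [simp]: "b 0 z = 0"
  using add_left[of 0 0 z] by simp

lemma zero_right [simp]: "b z 0 = 0"
  using add_right[of z 0 0] by simp

lemma diff_left: "b (x - y) z = b x z - b y z"
  using add_left[of "x - y" y z] by simp

lemma diff_right: "b z (x - y) = b z x - b z y"
  using add_right[of z "x - y" y] by simp

lemma sum_left: "b (sum h P) z = (\<Sum>p\<in>P. b (h p) z)"
  by (induction P rule: infinite_finite_induct) (simp_all add: add_left)

lemma sum_right: "b z (sum h P) = (\<Sum>p\<in>P. b z (h p))"
  by (induction P rule: infinite_finite_induct) (simp_all add: add_right)

lemma sum_scale_sum_scale:
  "b (\<Sum>p\<in>P. s (\<mu> p) (g p)) (\<Sum>q\<in>P. s (\<mu> q) (g q))
     = (\<Sum>p\<in>P. \<Sum>q\<in>P. \<mu> p * cnj (\<mu> q) * b (g p) (g q))"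
  unfolding sum_left sum_right scale_left scale_right sum_distrib_left
  by (rule sum.swap[THEN trans]) (simp add: mult.assoc mult.left_commute)

lemma polarization:
  "b u v = (b (u + s 1 v) (u + s 1 v) - b (u + s (-1) v) (u + s (-1) v)
     + \<i> * b (u + s \<i> v) (u + s \<i> v) - \<i> * b (u + s (-\<i>) v) (u + s (-\<i>) v)) / 4"
  by (simp add: add_left add_right scale_left scale_right algebra_simps)

lemma hermitian_if_diag_real:
  assumes diag_real: "\<And>x. Im (b x x) = 0"
  shows "b x y = cnj (b y x)"
proof -
  have "b (x + y) (x + y) = b x x + b x y + b y x + b y y"
    by (simp add: add_left add_right)
  then have im: "Im (b x y) + Im (b y x) = 0"
    using diag_real[of "x + y"] diag_real[of x] diag_real[of y] by simp
  have "b (x + s \<i> y) (x + s \<i> y) = b x x - \<i> * b x y + \<i> * b y x + b y y"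
    by (simp add: add_left add_right scale_left scale_right algebra_simps)
  then have re: "Re (b y x) - Re (b x y) = 0"
    using diag_real[of "x + s \<i> y"] diag_real[of x] diag_real[of y] by simp
  show ?thesis
    using im re by (intro complex_eqI) simp_all
qed

end

locale psd_form = sesquilinear_form +
  assumes hermitian: "b x y = cnj (b y x)"
    and diag_nonneg: "0 \<le> Re (b x x)"
begin

lemma diag_real: "Im (b x x) = 0"
  using arg_cong[where f = Im, OF hermitian[of x x]] by simp

lemma diag_nonneg_Reals: "b x x \<in> \<real>\<^sub>\<ge>\<^sub>0"
  using diag_real diag_nonneg by (simp add: complex_nonneg_Reals_iff)

lemma hnorm_nonneg: "0 \<le> hnorm b x"
  by (simp add: hnorm_def diag_nonneg)

lemma diag_sub_scaled:
  "Re (b (x - s (of_real t * b x y) y) (x - s (of_real t * b x y) y))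
     = Re (b x x) - 2 * t * (cmod (b x y))\<^sup>2 + t\<^sup>2 * (cmod (b x y))\<^sup>2 * Re (b y y)"
proof -
  have norm_sq: "b x y * cnj (b x y) = of_real ((cmod (b x y))\<^sup>2)"
    by (rule complex_norm_square[symmetric])
  have "b (x - s (of_real t * b x y) y) (x - s (of_real t * b x y) y)
      = b x x - of_real t * (b x y * cnj (b x y)) - of_real t * (b x y * cnj (b x y))
        + of_real (t\<^sup>2) * (b x y * cnj (b x y)) * b y y"
    using hermitian[of y x]
    by (simp add: diff_left diff_right scale_left scale_right algebra_simps power2_eq_square)
  then show ?thesis
    by (simp add: norm_sq diag_real power2_eq_square)
qed

lemma cauchy_schwarz_sq: "(cmod (b x y))\<^sup>2 \<le> Re (b x x) * Re (b y y)"
proof (cases "Re (b y y) = 0")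
  case True
  have "cmod (b x y) = 0"
  proof (rule ccontr)
    assume "cmod (b x y) \<noteq> 0"
    then have pos: "0 < (cmod (b x y))\<^sup>2" by simp
    define t where "t = (Re (b x x) + 1) / (2 * (cmod (b x y))\<^sup>2)"
    have "0 \<le> Re (b x x) - 2 * t * (cmod (b x y))\<^sup>2"
      using diag_nonneg[of "x - s (of_real t * b x y) y"] diag_sub_scaled[of x t y] True by simp
    also have "\<dots> = -1"
      using pos by (simp add: t_def field_simps)
    finally show False by simp
  qed
  then show ?thesis
    using True by simp
next
  case False
  then have pos: "0 < Re (b y y)"
    using diag_nonneg[of y] by simp
  have "0 \<le> Re (b x x) - 2 * (1 / Re (b y y)) * (cmod (b x y))\<^sup>2
             + (1 / Re (b y y))\<^sup>2 * (cmod (b x y))\<^sup>2 * Re (b y y)"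
    using diag_nonneg[of "x - s (of_real (1 / Re (b y y)) * b x y) y"]
      diag_sub_scaled[of x "1 / Re (b y y)" y] by simp
  then have "0 \<le> Re (b x x) - (cmod (b x y))\<^sup>2 / Re (b y y)"
    using pos by (simp add: power2_eq_square field_simps)
  then show ?thesis
    using pos by (simp add: field_simps)
qed

lemma cauchy_schwarz: "cmod (b x y) \<le> hnorm b x * hnorm b y"
proof -
  have "cmod (b x y) \<le> sqrt (Re (b x x) * Re (b y y))"
    by (rule real_le_rsqrt) (rule cauchy_schwarz_sq)
  then show ?thesis
    by (simp add: hnorm_def real_sqrt_mult)
qed

lemma null_vector:
  assumes "Re (b u u) = 0"
  shows "b x u = 0" and "b u x = 0"
  using cauchy_schwarz[of x u] cauchy_schwarz[of u x] assms by (simp_all add: hnorm_def)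

end

lemma hilbert_space_psd_form:
  assumes "hilbert_space s ip"
  shows "psd_form s ip"
proof -
  have herm: "ip x y = cnj (ip y x)"
    and add: "ip (x + y) z = ip x z + ip y z"
    and scale: "ip (s c x) z = c * ip x z"
    and pos: "0 \<le> Re (ip x x)" for x y z c
    using assms unfolding hilbert_space_def by blast+
  show ?thesis
  proof
    show "ip x (y + z) = ip x y + ip x z" for x y z
      using herm[of x "y + z"] add[of y z x] herm[of y x] herm[of z x] by simp
    show "ip x (s c y) = cnj c * ip x y" for x c y
      using herm[of x "s c y"] scale[of c y x] herm[of y x] by simp
  qed (fact add scale herm pos)+
qed

lemma psd_form_combination:
  assumes "psd_form s b1" and "psd_form s b2" and "\<And>x. \<beta> * Re (b2 x x) \<le> \<alpha> * Re (b1 x x)"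
  shows "psd_form s (\<lambda>x y. of_real \<alpha> * b1 x y - of_real \<beta> * b2 x y)"
proof -
  interpret B1: psd_form s b1 by fact
  interpret B2: psd_form s b2 by fact
  show ?thesis
  proof unfold_locales
    show "of_real \<alpha> * b1 x y - of_real \<beta> * b2 x y = cnj (of_real \<alpha> * b1 y x - of_real \<beta> * b2 y x)"
      for x y
      by (simp add: B1.hermitian[of y x] B2.hermitian[of y x])
  qed (simp_all add: B1.add_left B2.add_left B1.add_right B2.add_right B1.scale_left B2.scale_left
        B1.scale_right B2.scale_right assms(3) algebra_simps)
qed

lemma (in psd_form) orthogonal_projection:
  obtains \<mu> where "\<And>x. b (x - s (\<mu> x) u) u = 0"
    and "\<And>x y. b x y = b (x - s (\<mu> x) u) (y - s (\<mu> y) u) + \<mu> x * cnj (\<mu> y) * b u u"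
    and "\<And>z. b (u - s (\<mu> u) u) z = 0" and "\<And>z. b z (u - s (\<mu> u) u) = 0"
proof -
  define \<mu> where "\<mu> x = (if Re (b u u) = 0 then 0 else b x u / b u u)" for x
  have coeff: "b x u = \<mu> x * b u u" for x
    using null_vector(1)[of u x] by (auto simp: \<mu>_def)
  have orth: "b (x - s (\<mu> x) u) u = 0" for x
    by (simp add: diff_left scale_left coeff[of x])
  have gram: "b x y = b (x - s (\<mu> x) u) (y - s (\<mu> y) u) + \<mu> x * cnj (\<mu> y) * b u u" for x y
  proof -
    have "cnj (b u u) = b u u"
      using diag_real[of u] by (simp add: complex_eq_iff)
    then have "b u y = cnj (\<mu> y) * b u u"
      using hermitian[of u y] coeff[of y] by simp
    then show ?thesis
      by (simp add: diff_left diff_right scale_left scale_right coeff[of x])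
  qed
  have self: "b (u - s (\<mu> u) u) (u - s (\<mu> u) u) = b u u - \<mu> u * cnj (\<mu> u) * b u u"
    unfolding eq_diff_eq by (rule gram[symmetric])
  have "Re (b (u - s (\<mu> u) u) (u - s (\<mu> u) u)) = 0"
  proof (cases "Re (b u u) = 0")
    case True
    then show ?thesis
      unfolding self by (simp add: \<mu>_def)
  next
    case False
    then have "b u u \<noteq> 0" by auto
    then show ?thesis
      unfolding self by (simp add: \<mu>_def)
  qed
  then show ?thesis
    using that orth gram null_vector by blast
qed

text \<open>The value of the tensor product form b1 \<otimes> b2 at \<Sum>p\<in>P. f p \<otimes> g p.\<close>
definition tensor_form_value ::
  "('a \<Rightarrow> 'a \<Rightarrow> complex) \<Rightarrow> ('b \<Rightarrow> 'b \<Rightarrow> complex) \<Rightarrow> ('i \<Rightarrow> 'a) \<Rightarrow> ('i \<Rightarrow> 'b) \<Rightarrow> 'i set \<Rightarrow> complex"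
  where "tensor_form_value b1 b2 f g P = (\<Sum>p\<in>P. \<Sum>q\<in>P. b1 (f p) (f q) * b2 (g p) (g q))"

lemma tensor_form_value_diff_left:
  "tensor_form_value (\<lambda>x y. b1 x y - b1' x y) b2 f g P
     = tensor_form_value b1 b2 f g P - tensor_form_value b1' b2 f g P"
  by (simp add: tensor_form_value_def left_diff_distrib sum_subtractf)

lemma tensor_form_value_diff_right:
  "tensor_form_value b1 (\<lambda>x y. b2 x y - b2' x y) f g P
     = tensor_form_value b1 b2 f g P - tensor_form_value b1 b2' f g P"
  by (simp add: tensor_form_value_def right_diff_distrib sum_subtractf)

lemma tensor_form_value_scale_left:
  "tensor_form_value (\<lambda>x y. c * b1 x y) b2 f g P = c * tensor_form_value b1 b2 f g P"
  by (simp add: tensor_form_value_def sum_distrib_left mult.assoc)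

lemma tensor_form_value_scale_right:
  "tensor_form_value b1 (\<lambda>x y. c * b2 x y) f g P = c * tensor_form_value b1 b2 f g P"
  by (simp add: tensor_form_value_def sum_distrib_left mult.left_commute)

lemma schur_product_nonneg:
  assumes "psd_form s1 b1" and "psd_form s2 b2" and "finite P"
  shows "tensor_form_value b1 b2 f g P \<in> \<real>\<^sub>\<ge>\<^sub>0"
  using assms(3)
proof (induction P arbitrary: f rule: finite_induct)
  case empty
  then show ?case
    by (simp add: tensor_form_value_def)
next
  case (insert x P)
  interpret B1: psd_form s1 b1 by fact
  interpret B2: psd_form s2 b2 by fact
  \<comment> \<open>One Gram-Schmidt step: projecting off f x makes f x a null vector, and the
    projected-off parts contribute b1 (f x) (f x) * b2 w w.\<close>
  obtain \<mu> where gram: "\<And>y z. b1 y z = b1 (y - s1 (\<mu> y) (f x)) (z - s1 (\<mu> z) (f x))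
                                 + \<mu> y * cnj (\<mu> z) * b1 (f x) (f x)"
    and null: "\<And>z. b1 (f x - s1 (\<mu> (f x)) (f x)) z = 0" "\<And>z. b1 z (f x - s1 (\<mu> (f x)) (f x)) = 0"
    using B1.orthogonal_projection[of "f x"] by metis
  define f' where "f' p = f p - s1 (\<mu> (f p)) (f x)" for p
  define w where "w = (\<Sum>p\<in>insert x P. s2 (\<mu> (f p)) (g p))"
  have "tensor_form_value b1 b2 f g (insert x P)
      = tensor_form_value b1 b2 f' g (insert x P) + b1 (f x) (f x) * b2 w w"
    unfolding tensor_form_value_def w_def B2.sum_scale_sum_scale f'_def
    by (subst gram) (simp add: distrib_right sum.distrib sum_distrib_left algebra_simps)
  also have "tensor_form_value b1 b2 f' g (insert x P) = tensor_form_value b1 b2 f' g P"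
    using insert.hyps null by (simp add: tensor_form_value_def f'_def)
  finally show ?case
    using insert.IH B1.diag_nonneg_Reals B2.diag_nonneg_Reals by simp
qed

lemma tensor_form_value_bounds:
  assumes ip1: "psd_form s1 ip1" and ip2: "psd_form s2 ip2"
    and \<Phi>: "psd_form s1 \<Phi>" and \<Psi>: "psd_form s2 \<Psi>" and "finite P"
    and "0 \<le> A" and "\<And>x. A * Re (ip1 x x) \<le> Re (\<Phi> x x)"
    and "0 \<le> B" and "\<And>x. Re (\<Phi> x x) \<le> B * Re (ip1 x x)"
    and "\<And>x. C * Re (ip2 x x) \<le> Re (\<Psi> x x)" and "\<And>x. Re (\<Psi> x x) \<le> D * Re (ip2 x x)"
  shows "Im (tensor_form_value \<Phi> \<Psi> f g P) = 0
    \<and> A * C * Re (tensor_form_value ip1 ip2 f g P) \<le> Re (tensor_form_value \<Phi> \<Psi> f g P)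
    \<and> Re (tensor_form_value \<Phi> \<Psi> f g P) \<le> B * D * Re (tensor_form_value ip1 ip2 f g P)"
proof -
  let ?T = "\<lambda>b1 b2. tensor_form_value b1 b2 f g P"
  have nonneg: "?T b1 b2 \<in> \<real>\<^sub>\<ge>\<^sub>0" if "psd_form s1 b1" "psd_form s2 b2" for b1 b2
    using that \<open>finite P\<close> by (rule schur_product_nonneg)
  have lower: "?T \<Phi> \<Psi> = ?T (\<lambda>x y. \<Phi> x y - of_real A * ip1 x y) \<Psi>
      + of_real A * ?T ip1 (\<lambda>x y. \<Psi> x y - of_real C * ip2 x y) + of_real (A * C) * ?T ip1 ip2"
    by (simp add: tensor_form_value_diff_left tensor_form_value_diff_right
        tensor_form_value_scale_left tensor_form_value_scale_right algebra_simps)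
  have upper: "of_real (B * D) * ?T ip1 ip2 = ?T (\<lambda>x y. of_real B * ip1 x y - \<Phi> x y) \<Psi>
      + of_real B * ?T ip1 (\<lambda>x y. of_real D * ip2 x y - \<Psi> x y) + ?T \<Phi> \<Psi>"
    by (simp add: tensor_form_value_diff_left tensor_form_value_diff_right
        tensor_form_value_scale_left tensor_form_value_scale_right algebra_simps)
  have "?T (\<lambda>x y. \<Phi> x y - of_real A * ip1 x y) \<Psi> \<in> \<real>\<^sub>\<ge>\<^sub>0"
    "?T ip1 (\<lambda>x y. \<Psi> x y - of_real C * ip2 x y) \<in> \<real>\<^sub>\<ge>\<^sub>0"
    "?T (\<lambda>x y. of_real B * ip1 x y - \<Phi> x y) \<Psi> \<in> \<real>\<^sub>\<ge>\<^sub>0"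
    "?T ip1 (\<lambda>x y. of_real D * ip2 x y - \<Psi> x y) \<in> \<real>\<^sub>\<ge>\<^sub>0"
    "?T ip1 ip2 \<in> \<real>\<^sub>\<ge>\<^sub>0"
    using psd_form_combination[OF \<Phi> ip1, of A 1] psd_form_combination[OF \<Psi> ip2, of C 1]
      psd_form_combination[OF ip1 \<Phi>, of 1 B] psd_form_combination[OF ip2 \<Psi>, of 1 D]
      assms(7,9-11) by (simp_all add: nonneg ip1 ip2 \<Psi>)
  then show ?thesis
    using lower upper \<open>0 \<le> A\<close> \<open>0 \<le> B\<close>
    by (auto simp: complex_nonneg_Reals_iff complex_eq_iff)
qed

text \<open>frame_form ip j C fs u v is \<langle>S_C u, v\<rangle>, where S_C is the frame operator of fs.\<close>
definition frame_form :: "('w \<Rightarrow> 'w \<Rightarrow> complex) \<Rightarrow> ('v \<Rightarrow> 'w) \<Rightarrow> ('w \<Rightarrow> 'w) \<Rightarrow> (nat \<Rightarrow> 'v) \<Rightarrow> 'w \<Rightarrow> 'w \<Rightarrow> complex"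
  where "frame_form ip j C fs u v = (\<Sum>i. ip u (j (fs i)) * ip (C (j (fs i))) v)"

lemma sesquilinear_form_rank_one:
  assumes "sesquilinear_form s b"
  shows "sesquilinear_form s (\<lambda>u v. b u p * b q v)"
proof -
  interpret sesquilinear_form s b by fact
  show ?thesis
    by unfold_locales (simp_all add: add_left add_right scale_left scale_right algebra_simps)
qed

context
  fixes s :: "complex \<Rightarrow> 'w::ab_group_add \<Rightarrow> 'w" and ip :: "'w \<Rightarrow> 'w \<Rightarrow> complex"
    and j :: "'v \<Rightarrow> 'w" and C :: "'w \<Rightarrow> 'w" and fs :: "nat \<Rightarrow> 'v" and A B :: real
  assumes ip: "psd_form s ip" and frame: "controlled_frame ip j C fs A B"
begin

interpretation psd_form s ip by (fact ip)

lemma controlled_frame_form_diag: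
  "(\<lambda>i. ip w (j (fs i)) * ip (C (j (fs i))) w) sums frame_form ip j C fs w w"
  "Im (frame_form ip j C fs w w) = 0"
  "A * Re (ip w w) \<le> Re (frame_form ip j C fs w w)"
  "Re (frame_form ip j C fs w w) \<le> B * Re (ip w w)"
proof -
  obtain t where t: "(\<lambda>i. ip w (j (fs i)) * ip (C (j (fs i))) w) sums t"
    "Im t = 0" "A * (hnorm ip w)\<^sup>2 \<le> Re t" "Re t \<le> B * (hnorm ip w)\<^sup>2"
    using frame unfolding controlled_frame_def by blast
  have "frame_form ip j C fs w w = t"
    using t(1) by (simp add: frame_form_def sums_iff)
  moreover have "(hnorm ip w)\<^sup>2 = Re (ip w w)"
    by (simp add: hnorm_def diag_nonneg)
  ultimately show "(\<lambda>i. ip w (j (fs i)) * ip (C (j (fs i))) w) sums frame_form ip j C fs w w"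
    "Im (frame_form ip j C fs w w) = 0"
    "A * Re (ip w w) \<le> Re (frame_form ip j C fs w w)"
    "Re (frame_form ip j C fs w w) \<le> B * Re (ip w w)"
    using t by simp_all
qed

lemma controlled_frame_summable: "summable (\<lambda>i. ip u (j (fs i)) * ip (C (j (fs i))) v)"
proof -
  have diag: "summable (\<lambda>i. ip w (j (fs i)) * ip (C (j (fs i))) w)" for w
    using controlled_frame_form_diag(1) by (rule sums_summable)
  interpret rank_one: sesquilinear_form s "\<lambda>u v. ip u (j (fs i)) * ip (C (j (fs i))) v" for i
    by (rule sesquilinear_form_rank_one) unfold_locales
  show ?thesis
    by (subst rank_one.polarization)
      (intro summable_divide summable_add summable_diff summable_mult diag)
qed

lemma controlled_frame_form_psd: "psd_form s (frame_form ip j C fs)"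
proof -
  interpret rank_one: sesquilinear_form s "\<lambda>u v. ip u (j (fs i)) * ip (C (j (fs i))) v" for i
    by (rule sesquilinear_form_rank_one) unfold_locales
  have sesq: "sesquilinear_form s (frame_form ip j C fs)"
    by unfold_locales
      (simp_all add: frame_form_def rank_one.add_left rank_one.add_right rank_one.scale_left
        rank_one.scale_right suminf_add[OF controlled_frame_summable controlled_frame_summable]
        suminf_mult[OF controlled_frame_summable])
  have "0 < A"
    using frame by (simp add: controlled_frame_def)
  then have nonneg: "0 \<le> Re (frame_form ip j C fs x x)" for x
    using controlled_frame_form_diag(3)[of x] diag_nonneg[of x]
    by (meson order.trans zero_le_mult_iff less_imp_le)
  have herm: "frame_form ip j C fs x y = cnj (frame_form ip j C fs y x)" for x y
    using sesquilinear_form.hermitian_if_diag_real[OF sesq controlled_frame_form_diag(2)] .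
  show ?thesis
    by (intro psd_form.intro psd_form_axioms.intro sesq herm nonneg)
qed

end

lemma (in psd_form) hsum_unconditional_square_partial_sums:
  assumes "hsum_unconditional b u UNIV L"
  shows "(\<lambda>N. hnorm b (sum u ({..<N} \<times> {..<N}) - L)) \<longlonglongrightarrow> 0"
proof (rule LIMSEQ_I)
  fix e :: real
  assume "0 < e"
  then obtain F0 where F0: "finite F0"
    and close: "\<forall>F. finite F \<and> F0 \<subseteq> F \<and> F \<subseteq> UNIV \<longrightarrow> hnorm b (sum u F - L) < e"
    using assms unfolding hsum_unconditional_def by auto
  obtain N where "fst ` F0 \<union> snd ` F0 \<subseteq> {..<N}"
    using F0 finite_nat_bounded[of "fst ` F0 \<union> snd ` F0"] by blast
  then have "F0 \<subseteq> {..<n} \<times> {..<n}" if "N \<le> n" for n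
    using that by fastforce
  moreover have "finite ({..<n} \<times> {..<n})" for n :: nat
    by simp
  ultimately have "hnorm b (sum u ({..<n} \<times> {..<n}) - L) < e" if "N \<le> n" for n
    using close that by simp
  then show "\<exists>N. \<forall>n\<ge>N. norm (hnorm b (sum u ({..<n} \<times> {..<n}) - L) - 0) < e"
    using hnorm_nonneg by auto
qed

lemma (in psd_form) tendsto_left:
  assumes "(\<lambda>k. hnorm b (X k - L)) \<longlonglongrightarrow> 0"
  shows "(\<lambda>k. b (X k) y) \<longlonglongrightarrow> b L y"
proof -
  have "(\<lambda>k. b (X k - L) y) \<longlonglongrightarrow> 0"
  proof (rule tendsto_0_le[OF assms])
    show "\<forall>\<^sub>F k in sequentially. norm (b (X k - L) y) \<le> norm (hnorm b (X k - L)) * hnorm b y"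
      by (simp add: cauchy_schwarz hnorm_nonneg)
  qed
  then show ?thesis
    by (simp add: diff_left LIM_zero_iff)
qed

lemma (in psd_form) quadratic_form_tendsto:
  assumes add: "\<And>x y. T (x + y) = T x + T y" and bound: "\<And>z. hnorm b (T z) \<le> M * hnorm b z"
    and lim: "(\<lambda>k. hnorm b (x - Y k)) \<longlonglongrightarrow> 0"
  shows "(\<lambda>k. b (T (Y k)) (Y k)) \<longlonglongrightarrow> b (T x) x"
proof -
  define h where "h k = hnorm b (x - Y k)" for k
  have diff: "b (T (Y k)) (Y k) - b (T x) x
      = b (T (x - Y k)) (x - Y k) - b (T x) (x - Y k) - b (T (x - Y k)) x" for k
  proof -
    have expand: "b (T x - T z) (x - z) = b (T x) x - b (T x) z - b (T z) x + b (T z) z" for z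
      by (simp add: diff_left diff_right)
    have "T x = T (Y k) + T (x - Y k)"
      using add[of "Y k" "x - Y k"] by simp
    then have "b (T (Y k)) (Y k) = b (T x - T (x - Y k)) (x - (x - Y k))"
      by (simp add: algebra_simps)
    also have "\<dots> = b (T x) x - b (T x) (x - Y k) - b (T (x - Y k)) x + b (T (x - Y k)) (x - Y k)"
      by (rule expand)
    finally show ?thesis
      by simp
  qed
  have cs_bound: "cmod (b (T z) w) \<le> M * hnorm b z * hnorm b w" for z w
    using cauchy_schwarz[of "T z" w] mult_right_mono[OF bound[of z] hnorm_nonneg[of w]] by linarith
  have triangle: "cmod (p - q - r) \<le> cmod p + cmod q + cmod r" for p q r :: complex
    using norm_triangle_ineq4[of "p - q" r] norm_triangle_ineq4[of p q] by linarith
  have estimate: "norm (b (T (Y k)) (Y k) - b (T x) x)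
      \<le> M * h k * h k + hnorm b (T x) * h k + M * h k * hnorm b x" for k
    using triangle cs_bound[of "x - Y k" "x - Y k"] cauchy_schwarz[of "T x" "x - Y k"]
      cs_bound[of "x - Y k" x]
    unfolding diff h_def by (smt (verit))
  have "(\<lambda>k. M * h k * h k + hnorm b (T x) * h k + M * h k * hnorm b x)
      \<longlonglongrightarrow> M * 0 * 0 + hnorm b (T x) * 0 + M * 0 * hnorm b x"
    using lim unfolding h_def by (intro tendsto_intros)
  then have "(\<lambda>k. M * h k * h k + hnorm b (T x) * h k + M * h k * hnorm b x) \<longlonglongrightarrow> 0"
    by simp
  then have "(\<lambda>k. b (T (Y k)) (Y k) - b (T x) x) \<longlonglongrightarrow> 0"
    by (rule tendsto_0_le[where K = 1])
      (use estimate in \<open>auto intro: always_eventually order.trans[OF _ abs_ge_self]\<close>)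
  then show ?thesis
    by (simp add: LIM_zero_iff)
qed

lemma (in psd_form) bounds_extend_by_density:
  assumes add: "\<And>x y. T (x + y) = T x + T y" and bound: "\<And>z. hnorm b (T z) \<le> M * hnorm b z"
    and dense: "\<And>e. 0 < e \<Longrightarrow> \<exists>y\<in>D. hnorm b (x - y) < e"
    and bounds_on_D: "\<And>y. y \<in> D \<Longrightarrow>
      Im (b (T y) y) = 0 \<and> \<alpha> * Re (b y y) \<le> Re (b (T y) y) \<and> Re (b (T y) y) \<le> \<beta> * Re (b y y)"
  shows "Im (b (T x) x) = 0 \<and> \<alpha> * Re (b x x) \<le> Re (b (T x) x) \<and> Re (b (T x) x) \<le> \<beta> * Re (b x x)"
proof -
  have "\<forall>k. \<exists>y\<in>D. hnorm b (x - y) < inverse (real (Suc k))"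
    using dense by simp
  then obtain Y where Y: "\<And>k. Y k \<in> D" "\<And>k. hnorm b (x - Y k) < inverse (real (Suc k))"
    by metis
  have lim: "(\<lambda>k. hnorm b (x - Y k)) \<longlonglongrightarrow> 0"
    by (rule tendsto_0_le[OF LIMSEQ_inverse_real_of_nat, where K = 1])
      (use Y(2) hnorm_nonneg in \<open>auto intro: always_eventually less_imp_le\<close>)
  have T: "(\<lambda>k. b (T (Y k)) (Y k)) \<longlonglongrightarrow> b (T x) x"
    using add bound lim by (rule quadratic_form_tendsto)
  have I: "(\<lambda>k. b (Y k) (Y k)) \<longlonglongrightarrow> b x x"
    using quadratic_form_tendsto[of "\<lambda>z. z" 1, OF _ _ lim] by simp
  have "(\<lambda>k. Im (b (T (Y k)) (Y k))) \<longlonglongrightarrow> Im (b (T x) x)"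
    using T by (rule tendsto_Im)
  then have "Im (b (T x) x) = 0"
    using bounds_on_D[OF Y(1)] by (simp add: LIMSEQ_const_iff)
  moreover have "\<alpha> * Re (b x x) \<le> Re (b (T x) x)"
    by (rule LIMSEQ_le[OF tendsto_mult_left[OF tendsto_Re[OF I]] tendsto_Re[OF T]])
      (use bounds_on_D[OF Y(1)] in auto)
  moreover have "Re (b (T x) x) \<le> \<beta> * Re (b x x)"
    by (rule LIMSEQ_le[OF tendsto_Re[OF T] tendsto_mult_left[OF tendsto_Re[OF I]]])
      (use bounds_on_D[OF Y(1)] in auto)
  ultimately show ?thesis
    by blast
qed

locale controlled_tensor_frames =
  fixes sF :: "complex \<Rightarrow> 'f::ab_group_add \<Rightarrow> 'f" and ipF :: "'f \<Rightarrow> 'f \<Rightarrow> complex" and jF :: "'h \<Rightarrow> 'f"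
    and sG :: "complex \<Rightarrow> 'g::ab_group_add \<Rightarrow> 'g" and ipG :: "'g \<Rightarrow> 'g \<Rightarrow> complex" and jG :: "'k \<Rightarrow> 'g"
    and sT :: "complex \<Rightarrow> 't::ab_group_add \<Rightarrow> 't" and ipT :: "'t \<Rightarrow> 't \<Rightarrow> complex"
    and tp :: "'f \<Rightarrow> 'g \<Rightarrow> 't" and C1 :: "'f \<Rightarrow> 'f" and C2 :: "'g \<Rightarrow> 'g"
    and fs :: "nat \<Rightarrow> 'h" and gs :: "nat \<Rightarrow> 'k" and A B C D :: real and S :: "'t \<Rightarrow> 't"
  assumes HF: "hilbert_space sF ipF" and HG: "hilbert_space sG ipG"
    and frame1: "controlled_frame ipF jF C1 fs A B"
    and frame2: "controlled_frame ipG jG C2 gs C D"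
    and tensor: "is_hilbert_tensor sF ipF sG ipG sT ipT tp"
    and frame_operator: "is_tensor_frame_operator ipF jF C1 fs ipG jG C2 gs sT ipT tp S"
begin

sublocale F: psd_form sF ipF
  using HF by (rule hilbert_space_psd_form)

sublocale G: psd_form sG ipG
  using HG by (rule hilbert_space_psd_form)

sublocale T: psd_form sT ipT
  using tensor unfolding is_hilbert_tensor_def by (blast intro: hilbert_space_psd_form)

abbreviation "\<Phi>1 \<equiv> frame_form ipF jF C1 fs"
abbreviation "\<Phi>2 \<equiv> frame_form ipG jG C2 gs"

lemma inner_tp: "ipT (tp f g) (tp f' g') = ipF f f' * ipG g g'"
  using tensor unfolding is_hilbert_tensor_def by blast

lemma S_add: "S (x + y) = S x + S y"
  using frame_operator unfolding is_tensor_frame_operator_def bounded_op_def by blast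

lemma S_sum: "S (sum h P) = (\<Sum>p\<in>P. S (h p))"
proof -
  have "S 0 = 0"
    using S_add[of 0 0] by simp
  then show ?thesis
    using sum_comp_morphism[of S h P] S_add by simp
qed

lemma S_bounded: obtains M where "\<And>z. hnorm ipT (S z) \<le> M * hnorm ipT z"
  using frame_operator unfolding is_tensor_frame_operator_def bounded_op_def by blast

lemma inner_S_tp: "ipT (S (tp f g)) (tp f' g') = \<Phi>1 f f' * \<Phi>2 g g'"
proof -
  define a where "a i = ipF f (jF (fs i)) * ipF (C1 (jF (fs i))) f'" for i
  define c where "c k = ipG g (jG (gs k)) * ipG (C2 (jG (gs k))) g'" for k
  define u where "u = (\<lambda>(i, k). sT (ipF f (jF (fs i)) * ipG g (jG (gs k)))
                                  (tp (C1 (jF (fs i))) (C2 (jG (gs k)))))"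
  have "hsum_unconditional ipT u UNIV (S (tp f g))"
    using frame_operator unfolding is_tensor_frame_operator_def u_def by blast
  then have "(\<lambda>N. ipT (sum u ({..<N} \<times> {..<N})) (tp f' g')) \<longlonglongrightarrow> ipT (S (tp f g)) (tp f' g')"
    by (intro T.tendsto_left T.hsum_unconditional_square_partial_sums)
  moreover have "ipT (sum u ({..<N} \<times> {..<N})) (tp f' g') = (\<Sum>i<N. a i) * (\<Sum>k<N. c k)" for N
  proof -
    have "ipT (u z) (tp f' g') = (case z of (i, k) \<Rightarrow> a i * c k)" for z
      by (cases z) (simp add: u_def T.scale_left inner_tp a_def c_def algebra_simps)
    then have "ipT (sum u ({..<N} \<times> {..<N})) (tp f' g') = (\<Sum>(i, k)\<in>{..<N} \<times> {..<N}. a i * c k)"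
      by (simp add: T.sum_left)
    also have "\<dots> = (\<Sum>i<N. a i) * (\<Sum>k<N. c k)"
      by (simp add: sum.cartesian_product[symmetric] sum_product)
    finally show ?thesis .
  qed
  moreover have "(\<lambda>N. (\<Sum>i<N. a i) * (\<Sum>k<N. c k)) \<longlonglongrightarrow> \<Phi>1 f f' * \<Phi>2 g g'"
    unfolding a_def c_def frame_form_def
    by (intro tendsto_mult summable_LIMSEQ controlled_frame_summable[OF F.psd_form_axioms frame1]
        controlled_frame_summable[OF G.psd_form_axioms frame2])
  ultimately show ?thesis
    using LIMSEQ_unique by auto
qed

lemma inner_on_span:
  assumes "y = (\<Sum>p\<in>P. tp (f p) (g p))"
  shows "ipT (S y) y = tensor_form_value \<Phi>1 \<Phi>2 f g P"
    and "ipT y y = tensor_form_value ipF ipG f g P"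
  unfolding assms tensor_form_value_def S_sum T.sum_left T.sum_right inner_S_tp inner_tp
  by (rule sum.swap[THEN trans], simp)+

lemma bounds_on_span:
  assumes "y = (\<Sum>p\<in>P. tp (f p) (g p))" and "finite P"
  shows "Im (ipT (S y) y) = 0 \<and> A * C * Re (ipT y y) \<le> Re (ipT (S y) y)
    \<and> Re (ipT (S y) y) \<le> B * D * Re (ipT y y)"
proof -
  have "0 \<le> A" "0 \<le> B"
    using frame1 unfolding controlled_frame_def by auto
  then show ?thesis
    unfolding inner_on_span[OF assms(1)]
    using F.psd_form_axioms G.psd_form_axioms controlled_frame_form_psd[OF F.psd_form_axioms frame1]
      controlled_frame_form_psd[OF G.psd_form_axioms frame2] \<open>finite P\<close>
      controlled_frame_form_diag(3,4)[OF F.psd_form_axioms frame1]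
      controlled_frame_form_diag(3,4)[OF G.psd_form_axioms frame2]
    by (intro tensor_form_value_bounds) auto
qed

theorem frame_operator_bounds:
  "Im (ipT (S x) x) = 0 \<and> A * C * Re (ipT x x) \<le> Re (ipT (S x) x)
    \<and> Re (ipT (S x) x) \<le> B * D * Re (ipT x x)"
proof -
  obtain M where M: "\<And>z. hnorm ipT (S z) \<le> M * hnorm ipT z"
    using S_bounded by blast
  let ?span = "{\<Sum>p<m. tp (f p) (g p) | (m :: nat) f g. True}"
  have in_span: "sum_list (map (\<lambda>(x, y). tp x y) ps) \<in> ?span" for ps
    by (auto simp: sum_list_sum_nth atLeast0LessThan case_prod_beta intro!: exI)
  have dense: "\<exists>y\<in>?span. hnorm ipT (x - y) < e" if "0 < e" for e
  proof -
    obtain ps where "hnorm ipT (x - sum_list (map (\<lambda>(x, y). tp x y) ps)) < e"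
      using tensor \<open>0 < e\<close> unfolding is_hilbert_tensor_def by blast
    then show ?thesis
      using in_span by blast
  qed
  have on_span: "Im (ipT (S y) y) = 0 \<and> A * C * Re (ipT y y) \<le> Re (ipT (S y) y)
      \<and> Re (ipT (S y) y) \<le> B * D * Re (ipT y y)" if "y \<in> ?span" for y
  proof -
    from that obtain m :: nat and f g where "y = (\<Sum>p<m. tp (f p) (g p))"
      by blast
    then show ?thesis
      by (rule bounds_on_span) simp
  qed
  show ?thesis
    using S_add M dense on_span by (rule T.bounds_extend_by_density)
qed

end

theorem proposition4p6:
  fixes n :: nat
    and sH :: "complex \<Rightarrow> 'h::ab_group_add \<Rightarrow> 'h" and ipH :: "'h \<Rightarrow> 'h \<Rightarrow> 'h list \<Rightarrow> complex"
    and sK :: "complex \<Rightarrow> 'k::ab_group_add \<Rightarrow> 'k" and ipK :: "'k \<Rightarrow> 'k \<Rightarrow> 'k list \<Rightarrow> complex"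
    and as :: "'h list" and bs :: "'k list"
    and sF :: "complex \<Rightarrow> 'f::ab_group_add \<Rightarrow> 'f" and ipF :: "'f \<Rightarrow> 'f \<Rightarrow> complex" and jF :: "'h \<Rightarrow> 'f"
    and sG :: "complex \<Rightarrow> 'g::ab_group_add \<Rightarrow> 'g" and ipG :: "'g \<Rightarrow> 'g \<Rightarrow> complex" and jG :: "'k \<Rightarrow> 'g"
    and sT :: "complex \<Rightarrow> 't::ab_group_add \<Rightarrow> 't" and ipT :: "'t \<Rightarrow> 't \<Rightarrow> complex"
    and tp :: "'f \<Rightarrow> 'g \<Rightarrow> 't"
    and C1 :: "'f \<Rightarrow> 'f" and C2 :: "'g \<Rightarrow> 'g"
    and fs :: "nat \<Rightarrow> 'h" and gs :: "nat \<Rightarrow> 'k"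
    and A B C D :: real
    and S :: "'t \<Rightarrow> 't"
  assumes "n \<ge> 2"
    and "n_hilbert_space n sH ipH" and "n_hilbert_space n sK ipK"
    and "length as = n - 1" and "length bs = n - 1"
    and "is_HF sH ipH as sF ipF jF" and "is_HF sK ipK bs sG ipG jG"
    and "C1 \<in> GB sF ipF" and "C2 \<in> GB sG ipG"
    and "controlled_frame ipF jF C1 fs A B"
    and "controlled_frame ipG jG C2 gs C D"
    and "is_hilbert_tensor sF ipF sG ipG sT ipT tp"
    and "is_tensor_frame_operator ipF jF C1 fs ipG jG C2 gs sT ipT tp S"
  shows "\<forall>x. Im (ipT (S x) x) = 0 \<and>
             A * C * Re (ipT x x) \<le> Re (ipT (S x) x) \<and>
             Re (ipT (S x) x) \<le> B * D * Re (ipT x x)"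
proof -
  have "hilbert_space sF ipF" and "hilbert_space sG ipG"
    using assms(6,7) unfolding is_HF_def by blast+
  then interpret controlled_tensor_frames sF ipF jF sG ipG jG sT ipT tp C1 C2 fs gs A B C D S
    using assms(10-13) by unfold_locales
  show ?thesis
    using frame_operator_bounds by blast
qed

end
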